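(* Let $0<a<b<\infty$, $0<c<d<\infty$, $p,q>-1$ and $\alpha,\beta>0$. If $f:[a,b]\times[c,d]\to\mathbb{R}$ is of bounded variation in the sense of Arzelà, then the mixed Katugampola fractional integral ${}^{(p,q)}_{(a,c)}\mathfrak{I}^{(\alpha,\beta)}f$ is also of bounded variation in the sense of Arzelà on $[a,b]\times[c,d]$.
   Context: For $f:[a,b]\times[c,d]\to\mathbb{R}$ with $0<a<b$, $0<c<d$, real $\alpha,\beta>0$ and $(p,q)\neq(-1,-1)$, the mixed (left-hand sided) Katugampola fractional integral of $f$ is $$\big({}^{(p,q)}_{(a,c)}\mathfrak{I}^{(\alpha,\beta)}f\big)(x,y)=\frac{(p+1)^{1-\alpha}(q+1)^{1-\beta}}{\Gamma(\alpha)\Gamma(\beta)}\int_a^x\int_c^y (x^{p+1}-s^{p+1})^{\alpha-1}(y^{q+1}-t^{q+1})^{\beta-1}s^{p}t^{q}f(s,t)\,\mathrm{d}t\,\mathrm{d}s.$$ A function $f:[a,b]\times[c,d]\to\mathbb{R}$ is of bounded variation in the sense of Arzelà if there is a constant $K$ such that for every $m\in\mathbb{N}$ and all points $a=x_0\le x_1\le\dots\le x_m=b$, $c=y_0\le y_1\le\dots\le y_m=d$, one has $\sum_{i=0}^{m-1}|f(x_{i+1},y_{i+1})-f(x_i,y_i)|\le K$. Equivalently, $f=f_1-f_2$ with $f_1,f_2$ bounded and nondecreasing in each variable separately. *)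

theory Defs
  imports "HOL-Analysis.Analysis"
begin

definition katugampola_mixed ::
  "real \<Rightarrow> real \<Rightarrow> real \<Rightarrow> real \<Rightarrow> real \<Rightarrow> real \<Rightarrow> (real \<Rightarrow> real \<Rightarrow> real) \<Rightarrow> real \<Rightarrow> real \<Rightarrow> real"
where
  "katugampola_mixed p q a c \<alpha> \<beta> f x y =
     (p + 1) powr (1 - \<alpha>) * (q + 1) powr (1 - \<beta>) / (Gamma \<alpha> * Gamma \<beta>) *
     integral {a..x} (\<lambda>s. integral {c..y} (\<lambda>t.
        (x powr (p + 1) - s powr (p + 1)) powr (\<alpha> - 1) *
        (y powr (q + 1) - t powr (q + 1)) powr (\<beta> - 1) *
        s powr p * t powr q * f s t))"

definition arzela_bv ::
  "real \<Rightarrow> real \<Rightarrow> real \<Rightarrow> real \<Rightarrow> (real \<Rightarrow> real \<Rightarrow> real) \<Rightarrow> bool"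
where
  "arzela_bv a b c d f \<longleftrightarrow>
     (\<exists>K. \<forall>(m::nat) (xs::nat \<Rightarrow> real) (ys::nat \<Rightarrow> real).
        xs 0 = a \<and> xs m = b \<and> ys 0 = c \<and> ys m = d \<and>
        (\<forall>i<m. xs i \<le> xs (Suc i) \<and> ys i \<le> ys (Suc i)) \<longrightarrow>
        (\<Sum>i<m. \<bar>f (xs (Suc i)) (ys (Suc i)) - f (xs i) (ys i)\<bar>) \<le> K)"

end

theory Submission
  imports Defs
begin

(*
  An Arzela-BV function f is the difference of two nonnegative functions that are nondecreasing
  in each variable: with V(x, y) the supremum of the variations of f along monotone chains from
  (a, c) to (x, y), both V + |f(a, c)| and V - f + |f(a, c)| are nondecreasing, because appending
  a step to a chain adds its increment of |f| to the variation. Conversely, along a monotone chain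
  the variation of such a difference telescopes, so it is Arzela-BV.

  The mixed fractional integral is linear with a nonnegative kernel and is an iterated
  one-dimensional integral, so it remains to see that x |-> int_A^x k(x, s) F(s) ds, with
  k(x, s) = (x^(p+1) - s^(p+1))^(alpha-1) s^p, is nondecreasing for nonnegative nondecreasing F.
  For x <= x' the substitution u^(p+1) = s^(p+1) + x'^(p+1) - x^(p+1) rewrites the integral at x
  as the integral of k(x', u) F(s) over a subinterval of [A, x'], where s <= u.
*)

lemma continuous_mono_on_image_atLeastAtMost:
  fixes g :: "'a::linear_continuum_topology \<Rightarrow> 'b::linorder_topology"
  assumes "a \<le> b" "mono_on {a..b} g" "continuous_on {a..b} g"
  shows "g ` {a..b} = {g a..g b}"
proof
  show "g ` {a..b} \<subseteq> {g a..g b}"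
    using assms(1,2) by (auto simp: mono_on_def)
  show "{g a..g b} \<subseteq> g ` {a..b}"
    using IVT'[of g a _ b] assms(1,3) by force
qed

definition mono2_on :: "'a::order set \<Rightarrow> 'b::order set \<Rightarrow> ('a \<Rightarrow> 'b \<Rightarrow> 'c::order) \<Rightarrow> bool" where
  "mono2_on X Y h \<longleftrightarrow>
     (\<forall>x\<in>X. \<forall>x'\<in>X. \<forall>y\<in>Y. \<forall>y'\<in>Y. x \<le> x' \<longrightarrow> y \<le> y' \<longrightarrow> h x y \<le> h x' y')"

lemma mono2_onD:
  "mono2_on X Y h \<Longrightarrow> x \<in> X \<Longrightarrow> x' \<in> X \<Longrightarrow> y \<in> Y \<Longrightarrow> y' \<in> Y \<Longrightarrow> x \<le> x' \<Longrightarrow> y \<le> y'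
    \<Longrightarrow> h x y \<le> h x' y'"
  by (simp add: mono2_on_def)

lemma mono2_on_swap: "mono2_on X Y h \<Longrightarrow> mono2_on Y X (\<lambda>y x. h x y)"
  unfolding mono2_on_def by blast

lemma mono2_on_imp_mono_on_fst:
  "mono2_on X Y h \<Longrightarrow> X' \<subseteq> X \<Longrightarrow> y \<in> Y \<Longrightarrow> mono_on X' (\<lambda>x. h x y)"
  unfolding mono2_on_def mono_on_def by blast

lemma mono2_on_imp_mono_on_snd:
  "mono2_on X Y h \<Longrightarrow> x \<in> X \<Longrightarrow> Y' \<subseteq> Y \<Longrightarrow> mono_on Y' (h x)"
  unfolding mono2_on_def mono_on_def by blast

definition arzela_chain ::
  "real \<Rightarrow> real \<Rightarrow> real \<Rightarrow> real \<Rightarrow> nat \<Rightarrow> (nat \<Rightarrow> real) \<Rightarrow> (nat \<Rightarrow> real) \<Rightarrow> bool" where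
  "arzela_chain a c x y m xs ys \<longleftrightarrow>
     xs 0 = a \<and> xs m = x \<and> ys 0 = c \<and> ys m = y \<and> (\<forall>i<m. xs i \<le> xs (Suc i) \<and> ys i \<le> ys (Suc i))"

definition chain_variation ::
  "(real \<Rightarrow> real \<Rightarrow> real) \<Rightarrow> nat \<Rightarrow> (nat \<Rightarrow> real) \<Rightarrow> (nat \<Rightarrow> real) \<Rightarrow> real" where
  "chain_variation f m xs ys = (\<Sum>i<m. \<bar>f (xs (Suc i)) (ys (Suc i)) - f (xs i) (ys i)\<bar>)"

lemma arzela_bv_iff:
  "arzela_bv a b c d f \<longleftrightarrow>
     (\<exists>K. \<forall>m xs ys. arzela_chain a c b d m xs ys \<longrightarrow> chain_variation f m xs ys \<le> K)"
  by (simp add: arzela_bv_def arzela_chain_def chain_variation_def)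

lemma arzela_chain_mono:
  assumes "arzela_chain a c x y m xs ys" "i \<le> j" "j \<le> m"
  shows "xs i \<le> xs j" "ys i \<le> ys j"
  using assms(2,3)
proof (induction j rule: dec_induct)
  case (step n)
  with assms(1,3) show "xs i \<le> xs (Suc n)" "ys i \<le> ys (Suc n)"
    by (auto simp: arzela_chain_def intro: order_trans)
qed simp_all

lemma arzela_chain_bounds:
  assumes "arzela_chain a c x y m xs ys" "i \<le> m"
  shows "a \<le> xs i" "xs i \<le> x" "c \<le> ys i" "ys i \<le> y"
  using arzela_chain_mono[OF assms(1), of 0 i] arzela_chain_mono[OF assms(1), of i m] assms
  by (auto simp: arzela_chain_def)

lemma arzela_chain_single:
  assumes "a \<le> x" "c \<le> y"
  shows "arzela_chain a c x y 1 (\<lambda>i. if i = 0 then a else x) (\<lambda>i. if i = 0 then c else y)"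
    and "chain_variation f 1 (\<lambda>i. if i = 0 then a else x) (\<lambda>i. if i = 0 then c else y) = \<bar>f x y - f a c\<bar>"
  using assms by (simp_all add: arzela_chain_def chain_variation_def)

lemma arzela_chain_snoc:
  assumes "arzela_chain a c x y m xs ys" "x \<le> x'" "y \<le> y'"
  shows "arzela_chain a c x' y' (Suc m) (xs(Suc m := x')) (ys(Suc m := y'))"
    and "chain_variation f (Suc m) (xs(Suc m := x')) (ys(Suc m := y'))
           = chain_variation f m xs ys + \<bar>f x' y' - f x y\<bar>"
proof -
  show "arzela_chain a c x' y' (Suc m) (xs(Suc m := x')) (ys(Suc m := y'))"
    using assms by (auto simp: arzela_chain_def less_Suc_eq)
  have "chain_variation f m (xs(Suc m := x')) (ys(Suc m := y')) = chain_variation f m xs ys"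
    unfolding chain_variation_def by (rule sum.cong) auto
  then show "chain_variation f (Suc m) (xs(Suc m := x')) (ys(Suc m := y'))
      = chain_variation f m xs ys + \<bar>f x' y' - f x y\<bar>"
    using assms(1) by (simp add: chain_variation_def arzela_chain_def)
qed

definition arzela_variation :: "(real \<Rightarrow> real \<Rightarrow> real) \<Rightarrow> real \<Rightarrow> real \<Rightarrow> real \<Rightarrow> real \<Rightarrow> real" where
  "arzela_variation f a c x y = Sup {chain_variation f m xs ys | m xs ys. arzela_chain a c x y m xs ys}"

lemma chain_variation_le_arzela_variation:
  assumes bv: "arzela_bv a b c d f" and "x \<le> b" "y \<le> d" and chain: "arzela_chain a c x y m xs ys"
  shows "chain_variation f m xs ys \<le> arzela_variation f a c x y"
  unfolding arzela_variation_def
proof (rule cSup_upper)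
  obtain K where K: "\<And>m xs ys. arzela_chain a c b d m xs ys \<Longrightarrow> chain_variation f m xs ys \<le> K"
    using bv by (auto simp: arzela_bv_iff)
  show "bdd_above {chain_variation f m xs ys | m xs ys. arzela_chain a c x y m xs ys}"
  proof (rule bdd_aboveI, safe)
    fix m xs ys assume "arzela_chain a c x y m xs ys"
    from K[OF arzela_chain_snoc(1)[OF this assms(2,3)]] arzela_chain_snoc(2)[OF this assms(2,3), of f]
    show "chain_variation f m xs ys \<le> K" by simp
  qed
qed (use chain in blast)

lemma arzela_variation_superadditive:
  assumes bv: "arzela_bv a b c d f"
    and "a \<le> x" "x \<le> x'" "x' \<le> b" "c \<le> y" "y \<le> y'" "y' \<le> d"
  shows "arzela_variation f a c x y + \<bar>f x' y' - f x y\<bar> \<le> arzela_variation f a c x' y'"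
proof -
  have "arzela_variation f a c x y \<le> arzela_variation f a c x' y' - \<bar>f x' y' - f x y\<bar>"
    unfolding arzela_variation_def
  proof (rule cSup_least)
    show "{chain_variation f m xs ys | m xs ys. arzela_chain a c x y m xs ys} \<noteq> {}"
      using arzela_chain_single(1)[OF assms(2,5)] by blast
    fix v assume "v \<in> {chain_variation f m xs ys | m xs ys. arzela_chain a c x y m xs ys}"
    then obtain m xs ys where v: "v = chain_variation f m xs ys" and chain: "arzela_chain a c x y m xs ys"
      by blast
    have "v + \<bar>f x' y' - f x y\<bar> \<le> arzela_variation f a c x' y'"
      using chain_variation_le_arzela_variation[OF bv assms(4,7) arzela_chain_snoc(1)[OF chain assms(3,6)]]
        arzela_chain_snoc(2)[OF chain assms(3,6)] v by simp
    then show "v \<le> Sup {chain_variation f m xs ys | m xs ys. arzela_chain a c x' y' m xs ys}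
        - \<bar>f x' y' - f x y\<bar>"
      by (simp add: arzela_variation_def)
  qed
  then show ?thesis by simp
qed

lemma arzela_variation_nonneg:
  assumes "arzela_bv a b c d f" "a \<le> b" "c \<le> d"
  shows "0 \<le> arzela_variation f a c a c"
  using chain_variation_le_arzela_variation[OF assms arzela_chain_single(1)[of a a c c]]
    arzela_chain_single(2)[of a a c c f] by simp

lemma arzela_bv_imp_mono2_diff:
  assumes bv: "arzela_bv a b c d f" and "a \<le> b" "c \<le> d"
  obtains f1 f2 where "mono2_on {a..b} {c..d} f1" "mono2_on {a..b} {c..d} f2"
    and "\<And>x y. x \<in> {a..b} \<Longrightarrow> y \<in> {c..d} \<Longrightarrow> f x y = f1 x y - f2 x y \<and> 0 \<le> f1 x y \<and> 0 \<le> f2 x y"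
proof
  define V where "V = arzela_variation f a c"
  have super: "V x y + \<bar>f x' y' - f x y\<bar> \<le> V x' y'"
    if "x \<in> {a..b}" "x' \<in> {a..b}" "y \<in> {c..d}" "y' \<in> {c..d}" "x \<le> x'" "y \<le> y'" for x y x' y'
    unfolding V_def using that by (intro arzela_variation_superadditive[OF bv]) auto
  show "mono2_on {a..b} {c..d} (\<lambda>x y. V x y + \<bar>f a c\<bar>)"
    unfolding mono2_on_def using super by force
  show "mono2_on {a..b} {c..d} (\<lambda>x y. V x y - f x y + \<bar>f a c\<bar>)"
    unfolding mono2_on_def
  proof (intro ballI impI)
    fix x x' y y' assume "x \<in> {a..b}" "x' \<in> {a..b}" "y \<in> {c..d}" "y' \<in> {c..d}" "x \<le> x'" "y \<le> y'"
    from super[OF this] show "V x y - f x y + \<bar>f a c\<bar> \<le> V x' y' - f x' y' + \<bar>f a c\<bar>"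
      by linarith
  qed
  fix x y assume xy: "x \<in> {a..b}" "y \<in> {c..d}"
  have "V a c + \<bar>f x y - f a c\<bar> \<le> V x y"
    using super[of a x c y] xy assms(2,3) by auto
  moreover have "0 \<le> V a c"
    unfolding V_def by (rule arzela_variation_nonneg[OF assms])
  ultimately show "f x y = V x y + \<bar>f a c\<bar> - (V x y - f x y + \<bar>f a c\<bar>) \<and>
      0 \<le> V x y + \<bar>f a c\<bar> \<and> 0 \<le> V x y - f x y + \<bar>f a c\<bar>"
    by linarith
qed

lemma mono2_diff_imp_arzela_bv:
  assumes "mono2_on {a..b} {c..d} g1" "mono2_on {a..b} {c..d} g2"
    and "\<And>x y. x \<in> {a..b} \<Longrightarrow> y \<in> {c..d} \<Longrightarrow> g x y = g1 x y - g2 x y"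
  shows "arzela_bv a b c d g"
  unfolding arzela_bv_iff
proof (intro exI allI impI)
  fix m xs ys assume chain: "arzela_chain a c b d m xs ys"
  define G1 where "G1 i = g1 (xs i) (ys i)" for i
  define G2 where "G2 i = g2 (xs i) (ys i)" for i
  have step: "\<bar>g (xs (Suc i)) (ys (Suc i)) - g (xs i) (ys i)\<bar> \<le> (G1 (Suc i) - G1 i) + (G2 (Suc i) - G2 i)"
    if "i < m" for i
  proof -
    have in_rect: "xs j \<in> {a..b}" "ys j \<in> {c..d}" if "j \<le> m" for j
      using arzela_chain_bounds[OF chain that] by auto
    have "xs i \<le> xs (Suc i)" "ys i \<le> ys (Suc i)"
      using chain \<open>i < m\<close> by (auto simp: arzela_chain_def)
    then have "G1 i \<le> G1 (Suc i)" "G2 i \<le> G2 (Suc i)"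
      unfolding G1_def G2_def using \<open>i < m\<close> in_rect[of i] in_rect[of "Suc i"]
      by (auto intro!: mono2_onD[OF assms(1)] mono2_onD[OF assms(2)])
    moreover have "g (xs j) (ys j) = G1 j - G2 j" if "j \<le> m" for j
      unfolding G1_def G2_def using in_rect[OF that] by (rule assms(3))
    ultimately show ?thesis using \<open>i < m\<close> by (simp add: abs_le_iff)
  qed
  have "chain_variation g m xs ys \<le> (\<Sum>i<m. (G1 (Suc i) - G1 i) + (G2 (Suc i) - G2 i))"
    unfolding chain_variation_def by (rule sum_mono) (use step in auto)
  also have "\<dots> = (G1 m - G1 0) + (G2 m - G2 0)"
    by (simp add: sum.distrib sum_lessThan_telescope)
  also have "\<dots> = g1 b d - g1 a c + (g2 b d - g2 a c)"
    using chain by (simp add: G1_def G2_def arzela_chain_def)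
  finally show "chain_variation g m xs ys \<le> g1 b d - g1 a c + (g2 b d - g2 a c)" .
qed

definition katugampola_kernel :: "real \<Rightarrow> real \<Rightarrow> real \<Rightarrow> real \<Rightarrow> real" where
  "katugampola_kernel p \<alpha> x s = (x powr (p + 1) - s powr (p + 1)) powr (\<alpha> - 1) * s powr p"

lemma katugampola_kernel_nonneg: "0 \<le> katugampola_kernel p \<alpha> x s"
  by (simp add: katugampola_kernel_def)

lemma katugampola_kernel_has_integral:
  assumes "0 < A" "A \<le> x" "p > -1" "\<alpha> > 0"
  shows "(katugampola_kernel p \<alpha> x has_integral
           (x powr (p + 1) - A powr (p + 1)) powr \<alpha> / ((p + 1) * \<alpha>)) {A..x}"
proof -
  define r where "r = p + 1"
  have r: "r > 0" using assms(3) by (simp add: r_def)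
  define \<Phi> where "\<Phi> s = (x powr r - s powr r) powr \<alpha> * (-1 / (r * \<alpha>))" for s
  have "continuous_on {A..x} (\<lambda>s. (x powr r - s powr r) powr \<alpha>)"
    using assms r by (intro continuous_on_powr' continuous_intros) (auto intro!: powr_mono2)
  then have cont: "continuous_on {A..x} \<Phi>"
    unfolding \<Phi>_def by (rule continuous_on_mult_right)
  have "(\<Phi> has_vector_derivative katugampola_kernel p \<alpha> x s) (at s)" if s: "s \<in> {A<..<x}" for s
  proof -
    have "s > 0" "x powr r - s powr r > 0" using s assms r by (auto intro!: powr_less_mono2)
    then have "(\<Phi> has_real_derivative
        \<alpha> * (x powr r - s powr r) powr (\<alpha> - 1) * - (r * s powr (r - 1)) * (-1 / (r * \<alpha>))) (at s)"
      unfolding \<Phi>_def by (auto intro!: derivative_eq_intros)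
    moreover have "\<alpha> * K * - (r * S) * (-1 / (r * \<alpha>)) = K * S" for K S
      using r assms(4) by (simp add: field_simps)
    ultimately show ?thesis
      by (simp add: has_real_derivative_iff_has_vector_derivative katugampola_kernel_def r_def)
  qed
  from fundamental_theorem_of_calculus_interior[OF assms(2) cont this]
  show ?thesis by (simp add: \<Phi>_def r_def diff_divide_distrib)
qed

lemma katugampola_kernel_absolutely_integrable:
  assumes "0 < A" "A \<le> x" "p > -1" "\<alpha> > 0"
  shows "katugampola_kernel p \<alpha> x absolutely_integrable_on {A..x}"
  using katugampola_kernel_has_integral[OF assms] katugampola_kernel_nonneg
  by (intro nonnegative_absolutely_integrable_1) auto

lemma katugampola_kernel_mult_absolutely_integrable:
  assumes "0 < A" "A \<le> x" "p > -1" "\<alpha> > 0" and F: "mono_on {A..x} F"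
  shows "(\<lambda>s. katugampola_kernel p \<alpha> x s * F s) absolutely_integrable_on {A..x}"
proof -
  have "F ` {A..x} \<subseteq> {F A..F x}"
    using F assms(2) by (auto simp: mono_on_def)
  then have "bounded (F ` {A..x})"
    by (rule bounded_subset[OF bounded_closed_interval])
  moreover have "F \<in> borel_measurable (lebesgue_on {A..x})"
    using integrable_mono_on[OF F] by (rule borel_measurable_integrable)
  ultimately have "(\<lambda>s. F s * katugampola_kernel p \<alpha> x s) absolutely_integrable_on {A..x}"
    by (intro absolutely_integrable_bounded_measurable_product_real
        katugampola_kernel_absolutely_integrable assms) auto
  then show ?thesis by (simp add: mult.commute)
qed

lemma katugampola_kernel_mult_integrable:
  assumes "0 < A" "A \<le> x" "p > -1" "\<alpha> > 0" and "mono_on {A..x} F"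
  shows "(\<lambda>s. katugampola_kernel p \<alpha> x s * F s) integrable_on {A..x}"
  using katugampola_kernel_mult_absolutely_integrable[OF assms]
  by (rule set_lebesgue_integral_eq_integral(1))

text \<open>The one-dimensional left-sided Katugampola integral without its normalising factor
  \<open>(p + 1) powr (1 - \<alpha>) / Gamma \<alpha>\<close>.\<close>

definition katugampola_integral :: "real \<Rightarrow> real \<Rightarrow> real \<Rightarrow> (real \<Rightarrow> real) \<Rightarrow> real \<Rightarrow> real" where
  "katugampola_integral p \<alpha> A F x = integral {A..x} (\<lambda>s. katugampola_kernel p \<alpha> x s * F s)"

lemma katugampola_integral_cong:
  "(\<And>s. s \<in> {A..x} \<Longrightarrow> F s = G s) \<Longrightarrow> katugampola_integral p \<alpha> A F x = katugampola_integral p \<alpha> A G x"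
  unfolding katugampola_integral_def by (intro integral_cong) simp

lemma katugampola_integral_diff:
  assumes "0 < A" "A \<le> x" "p > -1" "\<alpha> > 0" "mono_on {A..x} F" "mono_on {A..x} G"
  shows "katugampola_integral p \<alpha> A (\<lambda>s. F s - G s) x
           = katugampola_integral p \<alpha> A F x - katugampola_integral p \<alpha> A G x"
  unfolding katugampola_integral_def right_diff_distrib
  by (intro integral_diff katugampola_kernel_mult_integrable assms)

lemma katugampola_integral_le:
  assumes "0 < A" "A \<le> x" "p > -1" "\<alpha> > 0" "mono_on {A..x} F" "mono_on {A..x} G"
    and "\<And>s. s \<in> {A..x} \<Longrightarrow> F s \<le> G s"
  shows "katugampola_integral p \<alpha> A F x \<le> katugampola_integral p \<alpha> A G x"
  unfolding katugampola_integral_def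
  by (intro integral_le katugampola_kernel_mult_integrable mult_left_mono katugampola_kernel_nonneg assms)

lemma katugampola_integral_nonneg:
  assumes "0 < A" "A \<le> x" "p > -1" "\<alpha> > 0" "mono_on {A..x} F" "\<And>s. s \<in> {A..x} \<Longrightarrow> 0 \<le> F s"
  shows "0 \<le> katugampola_integral p \<alpha> A F x"
  unfolding katugampola_integral_def
  by (intro integral_nonneg katugampola_kernel_mult_integrable mult_nonneg_nonneg katugampola_kernel_nonneg assms)

definition katugampola_shift :: "real \<Rightarrow> real \<Rightarrow> real \<Rightarrow> real" where
  "katugampola_shift p D s = (s powr (p + 1) + D) powr (1 / (p + 1))"

lemma katugampola_shift_powr:
  assumes "p > -1" "D \<ge> 0"
  shows "katugampola_shift p D s powr (p + 1) = s powr (p + 1) + D"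
  using assms by (simp add: katugampola_shift_def powr_powr powr_one)

lemma katugampola_shift_ge:
  assumes "p > -1" "D \<ge> 0" "s \<ge> 0"
  shows "s \<le> katugampola_shift p D s"
proof -
  have "s = (s powr (p + 1)) powr (1 / (p + 1))"
    using assms by (simp add: powr_powr powr_one)
  also have "\<dots> \<le> katugampola_shift p D s"
    unfolding katugampola_shift_def using assms by (auto intro!: powr_mono2)
  finally show ?thesis .
qed

lemma katugampola_shift_strict_mono:
  assumes "p > -1" "D \<ge> 0"
  shows "strict_mono_on {0..} (katugampola_shift p D)"
  unfolding katugampola_shift_def strict_mono_on_def using assms
  by (auto intro!: powr_less_mono2 add_nonneg_nonneg)

lemma katugampola_shift_has_derivative:
  assumes "p > -1" "D \<ge> 0" "s > 0"
  shows "(katugampola_shift p D has_real_derivative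
           (s powr (p + 1) + D) powr (- p / (p + 1)) * s powr p) (at s)"
proof -
  have pos: "s powr (p + 1) + D > 0" using assms by (simp add: add_pos_nonneg)
  have "(katugampola_shift p D has_real_derivative
      1 / (p + 1) * (s powr (p + 1) + D) powr (1 / (p + 1) - 1) * ((p + 1) * s powr (p + 1 - 1))) (at s)"
    unfolding katugampola_shift_def using assms pos by (auto intro!: derivative_eq_intros)
  moreover have "1 / (p + 1) - 1 = - p / (p + 1)"
    using assms(1) by (simp add: field_simps)
  ultimately show ?thesis using assms(1) by simp
qed

lemma katugampola_shift_endpoint:
  assumes "p > -1" "0 \<le> x'"
  shows "katugampola_shift p (x' powr (p + 1) - x powr (p + 1)) x = x'"
  using assms by (simp add: katugampola_shift_def powr_powr powr_one)

lemma katugampola_shift_le: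
  assumes "p > -1" "0 \<le> s" "s \<le> x" "x \<le> x'"
  shows "katugampola_shift p (x' powr (p + 1) - x powr (p + 1)) s \<le> x'"
proof -
  have D: "x' powr (p + 1) - x powr (p + 1) \<ge> 0"
    using powr_mono2[of "p + 1" x x'] assms by simp
  have "katugampola_shift p (x' powr (p + 1) - x powr (p + 1)) s
      \<le> katugampola_shift p (x' powr (p + 1) - x powr (p + 1)) x"
    using assms
    by (intro mono_onD[OF strict_mono_on_imp_mono_on[OF katugampola_shift_strict_mono[OF assms(1) D]]])
      auto
  then show ?thesis
    using katugampola_shift_endpoint[OF assms(1), of x' x] assms by simp
qed

lemma katugampola_kernel_shift:
  assumes "p > -1" "0 \<le> x" "x \<le> x'" "s > 0"
  defines "D \<equiv> x' powr (p + 1) - x powr (p + 1)"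
  shows "katugampola_kernel p \<alpha> x' (katugampola_shift p D s) *
           ((s powr (p + 1) + D) powr (- p / (p + 1)) * s powr p) = katugampola_kernel p \<alpha> x s"
proof -
  have D: "D \<ge> 0"
    unfolding D_def using powr_mono2[of "p + 1" x x'] assms(1-4) by simp
  let ?v = "s powr (p + 1) + D"
  have v: "?v > 0" using assms(4) D by (simp add: add_pos_nonneg)
  have "x' powr (p + 1) - katugampola_shift p D s powr (p + 1) = x powr (p + 1) - s powr (p + 1)"
    using katugampola_shift_powr[OF assms(1) D] by (simp add: D_def)
  moreover have "katugampola_shift p D s powr p * ?v powr (- p / (p + 1)) = 1"
    using v by (simp add: katugampola_shift_def powr_powr flip: powr_add)
  ultimately show ?thesis
    by (simp add: katugampola_kernel_def mult_ac)
qed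

lemma katugampola_integral_shift:
  assumes "0 < A" "A \<le> x" "x \<le> x'" "p > -1" "\<alpha> > 0" and F: "mono_on {A..x'} F"
  defines "\<phi> \<equiv> katugampola_shift p (x' powr (p + 1) - x powr (p + 1))"
  shows "((\<lambda>s. katugampola_kernel p \<alpha> x s * F (\<phi> s)) has_integral
           integral {\<phi> A..x'} (\<lambda>u. katugampola_kernel p \<alpha> x' u * F u)) {A..x}"
proof -
  define D where "D = x' powr (p + 1) - x powr (p + 1)"
  define \<phi>' where "\<phi>' s = (s powr (p + 1) + D) powr (- p / (p + 1)) * s powr p" for s
  define h where "h u = katugampola_kernel p \<alpha> x' u * F u" for u
  have D: "D \<ge> 0"
    unfolding D_def using powr_mono2[of "p + 1" x x'] assms(1-4) by simp
  have \<phi>_def': "\<phi> = katugampola_shift p D" by (simp add: \<phi>_def D_def)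
  have der: "(\<phi> has_real_derivative \<phi>' s) (at s within {A..x})" if "s \<in> {A..x}" for s
  proof -
    have "s > 0" using that assms(1) by simp
    from katugampola_shift_has_derivative[OF assms(4) D this] show ?thesis
      unfolding \<phi>_def' \<phi>'_def by (rule has_field_derivative_at_within)
  qed
  have strict: "strict_mono_on {A..x} \<phi>"
    using monotone_on_subset[OF katugampola_shift_strict_mono[OF assms(4) D]] assms(1)
    by (auto simp: \<phi>_def')
  have "\<phi> x = x'"
    using katugampola_shift_endpoint[OF assms(4)] assms(1-3) by (simp add: \<phi>_def)
  then have image: "\<phi> ` {A..x} = {\<phi> A..x'}"
    using continuous_mono_on_image_atLeastAtMost[OF assms(2) strict_mono_on_imp_mono_on[OF strict]
        DERIV_continuous_on[OF der]] by simp
  have "A \<le> \<phi> A"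
    unfolding \<phi>_def' using katugampola_shift_ge[OF assms(4) D] assms(1) by simp
  then have "h absolutely_integrable_on {\<phi> A..x'}"
    unfolding h_def using assms(1-3)
    by (intro absolutely_integrable_on_subinterval[OF
          katugampola_kernel_mult_absolutely_integrable[OF assms(1) _ assms(4,5) F]]) auto
  then have "(\<lambda>s. \<bar>\<phi>' s\<bar> * h (\<phi> s)) absolutely_integrable_on {A..x} \<and>
      integral {A..x} (\<lambda>s. \<bar>\<phi>' s\<bar> * h (\<phi> s)) = integral {\<phi> A..x'} h"
    using has_absolute_integral_change_of_variables_1'[OF _ der strict_mono_on_imp_inj_on[OF strict]]
    by (simp add: image)
  then have int: "(\<lambda>s. \<bar>\<phi>' s\<bar> * h (\<phi> s)) integrable_on {A..x}"
    and val: "integral {A..x} (\<lambda>s. \<bar>\<phi>' s\<bar> * h (\<phi> s)) = integral {\<phi> A..x'} h"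
    using set_lebesgue_integral_eq_integral(1) by auto
  have eq: "\<bar>\<phi>' s\<bar> * h (\<phi> s) = katugampola_kernel p \<alpha> x s * F (\<phi> s)"
    if "s \<in> {A..x}" for s
    using katugampola_kernel_shift[OF assms(4) _ assms(3), of s \<alpha>] that assms(1)
    by (simp add: \<phi>'_def h_def \<phi>_def' D_def mult_ac)
  have "(\<lambda>s. katugampola_kernel p \<alpha> x s * F (\<phi> s)) integrable_on {A..x}"
    using int integrable_cong[of "{A..x}", OF eq] by simp
  moreover have "integral {A..x} (\<lambda>s. katugampola_kernel p \<alpha> x s * F (\<phi> s)) = integral {\<phi> A..x'} h"
    using val integral_cong[of "{A..x}", OF eq] by simp
  ultimately show ?thesis
    unfolding h_def by (metis integrable_integral)
qed

lemma katugampola_integral_mono: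
  assumes "0 < A" "A \<le> x" "x \<le> x'" "p > -1" "\<alpha> > 0"
    and F: "mono_on {A..x'} F" and F_nonneg: "\<And>s. s \<in> {A..x'} \<Longrightarrow> 0 \<le> F s"
  shows "katugampola_integral p \<alpha> A F x \<le> katugampola_integral p \<alpha> A F x'"
proof -
  define \<phi> where "\<phi> = katugampola_shift p (x' powr (p + 1) - x powr (p + 1))"
  define h where "h u = katugampola_kernel p \<alpha> x' u * F u" for u
  have shift: "((\<lambda>s. katugampola_kernel p \<alpha> x s * F (\<phi> s)) has_integral integral {\<phi> A..x'} h) {A..x}"
    unfolding \<phi>_def h_def by (rule katugampola_integral_shift[OF assms(1-5) F])
  have \<phi>_ge: "s \<le> \<phi> s" if "s \<ge> A" for s
    unfolding \<phi>_def using powr_mono2[of "p + 1" x x'] assms that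
    by (intro katugampola_shift_ge) auto
  have \<phi>_le: "\<phi> s \<le> x'" if "A \<le> s" "s \<le> x" for s
    unfolding \<phi>_def using assms that by (intro katugampola_shift_le) auto
  have int_h: "h integrable_on {A..x'}"
    unfolding h_def using assms(1-5) F by (intro katugampola_kernel_mult_integrable) auto
  have "katugampola_integral p \<alpha> A F x \<le> katugampola_integral p \<alpha> A (\<lambda>s. F (\<phi> s)) x"
    unfolding katugampola_integral_def
  proof (rule integral_le)
    show "(\<lambda>s. katugampola_kernel p \<alpha> x s * F s) integrable_on {A..x}"
      using assms(1-5) mono_on_subset[OF F] by (intro katugampola_kernel_mult_integrable) auto
    show "(\<lambda>s. katugampola_kernel p \<alpha> x s * F (\<phi> s)) integrable_on {A..x}"
      using shift by blast
    fix s assume "s \<in> {A..x}"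
    then have "F s \<le> F (\<phi> s)"
      using \<phi>_ge[of s] \<phi>_le[of s] assms(3) by (intro mono_onD[OF F]) auto
    then show "katugampola_kernel p \<alpha> x s * F s \<le> katugampola_kernel p \<alpha> x s * F (\<phi> s)"
      by (rule mult_left_mono) (rule katugampola_kernel_nonneg)
  qed
  also have "\<dots> = integral {\<phi> A..x'} h"
    unfolding katugampola_integral_def using shift by (rule integral_unique)
  also have "\<dots> \<le> integral {A..\<phi> A} h + integral {\<phi> A..x'} h"
  proof -
    have "h integrable_on {A..\<phi> A}"
      using \<phi>_le[of A] assms(2) by (intro integrable_on_subinterval[OF int_h]) auto
    moreover have "0 \<le> h u" if "u \<in> {A..\<phi> A}" for u
      using that \<phi>_le[of A] assms(2) F_nonneg[of u]
      by (simp add: h_def katugampola_kernel_nonneg)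
    ultimately have "0 \<le> integral {A..\<phi> A} h" by (rule integral_nonneg)
    then show ?thesis by simp
  qed
  also have "\<dots> = katugampola_integral p \<alpha> A F x'"
    unfolding katugampola_integral_def h_def[symmetric] using \<phi>_ge[of A] \<phi>_le[of A] assms(2)
    by (intro Henstock_Kurzweil_Integration.integral_combine int_h) auto
  finally show ?thesis .
qed

lemma katugampola_mixed_eq_integral:
  "katugampola_mixed p q a c \<alpha> \<beta> f x y =
     (p + 1) powr (1 - \<alpha>) * (q + 1) powr (1 - \<beta>) / (Gamma \<alpha> * Gamma \<beta>) *
     katugampola_integral p \<alpha> a (\<lambda>s. katugampola_integral q \<beta> c (f s) y) x"
proof -
  have "integral {c..y} (\<lambda>t. (x powr (p + 1) - s powr (p + 1)) powr (\<alpha> - 1) *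
          (y powr (q + 1) - t powr (q + 1)) powr (\<beta> - 1) * s powr p * t powr q * f s t)
      = katugampola_kernel p \<alpha> x s * katugampola_integral q \<beta> c (f s) y" for s
    using integral_cmul[of "{c..y}" "katugampola_kernel p \<alpha> x s" "\<lambda>t. katugampola_kernel q \<beta> y t * f s t"]
    by (simp add: katugampola_integral_def katugampola_kernel_def mult_ac)
  then show ?thesis
    by (simp add: katugampola_mixed_def katugampola_integral_def)
qed

lemma mono2_on_katugampola_integral:
  assumes "0 < a" "p > -1" "\<alpha> > 0"
    and H: "mono2_on {a..b} Y H" and H_nonneg: "\<And>s y. s \<in> {a..b} \<Longrightarrow> y \<in> Y \<Longrightarrow> 0 \<le> H s y"
  shows "mono2_on {a..b} Y (\<lambda>x y. katugampola_integral p \<alpha> a (\<lambda>s. H s y) x)"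
  unfolding mono2_on_def
proof (intro ballI impI)
  fix x x' y y' assume xy: "x \<in> {a..b}" "x' \<in> {a..b}" "y \<in> Y" "y' \<in> Y" "x \<le> x'" "y \<le> y'"
  have "katugampola_integral p \<alpha> a (\<lambda>s. H s y) x \<le> katugampola_integral p \<alpha> a (\<lambda>s. H s y) x'"
    using xy assms by (intro katugampola_integral_mono mono2_on_imp_mono_on_fst[OF H]) auto
  also have "\<dots> \<le> katugampola_integral p \<alpha> a (\<lambda>s. H s y') x'"
    using xy assms by (intro katugampola_integral_le mono2_on_imp_mono_on_fst[OF H] mono2_onD[OF H]) auto
  finally show "katugampola_integral p \<alpha> a (\<lambda>s. H s y) x \<le> katugampola_integral p \<alpha> a (\<lambda>s. H s y') x'" .
qed

lemma mono2_on_katugampola_iterated: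
  assumes "0 < a" "0 < c" "p > -1" "q > -1" "\<alpha> > 0" "\<beta> > 0"
    and h: "mono2_on {a..b} {c..d} h" and h_nonneg: "\<And>s t. s \<in> {a..b} \<Longrightarrow> t \<in> {c..d} \<Longrightarrow> 0 \<le> h s t"
  shows "mono2_on {a..b} {c..d}
           (\<lambda>x y. katugampola_integral p \<alpha> a (\<lambda>s. katugampola_integral q \<beta> c (h s) y) x)"
proof (rule mono2_on_katugampola_integral[OF assms(1,3,5)])
  have "mono2_on {c..d} {a..b} (\<lambda>t s. h s t)"
    using h by (rule mono2_on_swap)
  then have "mono2_on {c..d} {a..b} (\<lambda>y s. katugampola_integral q \<beta> c (\<lambda>t. h s t) y)"
    by (rule mono2_on_katugampola_integral[OF assms(2,4,6)]) (use h_nonneg in auto)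
  then show "mono2_on {a..b} {c..d} (\<lambda>s y. katugampola_integral q \<beta> c (h s) y)"
    using mono2_on_swap by fastforce
  show "0 \<le> katugampola_integral q \<beta> c (h s) y" if "s \<in> {a..b}" "y \<in> {c..d}" for s y
    using that h_nonneg
    by (intro katugampola_integral_nonneg[OF assms(2) _ assms(4,6) mono2_on_imp_mono_on_snd[OF h]]) auto
qed

lemma katugampola_iterated_diff:
  assumes "0 < a" "0 < c" "p > -1" "q > -1" "\<alpha> > 0" "\<beta> > 0"
    and h1: "mono2_on {a..b} {c..d} h1" and h2: "mono2_on {a..b} {c..d} h2"
    and h: "\<And>s t. s \<in> {a..b} \<Longrightarrow> t \<in> {c..d} \<Longrightarrow> h s t = h1 s t - h2 s t"
    and "x \<in> {a..b}" "y \<in> {c..d}"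
  shows "katugampola_integral p \<alpha> a (\<lambda>s. katugampola_integral q \<beta> c (h s) y) x
    = katugampola_integral p \<alpha> a (\<lambda>s. katugampola_integral q \<beta> c (h1 s) y) x
      - katugampola_integral p \<alpha> a (\<lambda>s. katugampola_integral q \<beta> c (h2 s) y) x"
proof -
  have inner_mono: "mono_on {a..x} (\<lambda>s. katugampola_integral q \<beta> c (g s) y)"
    if g: "mono2_on {a..b} {c..d} g" for g
  proof (rule mono_onI)
    fix s s' assume "s \<in> {a..x}" "s' \<in> {a..x}" "s \<le> s'"
    with assms show "katugampola_integral q \<beta> c (g s) y \<le> katugampola_integral q \<beta> c (g s') y"
      by (intro katugampola_integral_le mono2_on_imp_mono_on_snd[OF g] mono2_onD[OF g]) auto
  qed
  have "katugampola_integral q \<beta> c (h s) y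
      = katugampola_integral q \<beta> c (h1 s) y - katugampola_integral q \<beta> c (h2 s) y"
    if "s \<in> {a..x}" for s
  proof -
    have "katugampola_integral q \<beta> c (h s) y = katugampola_integral q \<beta> c (\<lambda>t. h1 s t - h2 s t) y"
      using that assms(10,11) by (intro katugampola_integral_cong h) auto
    also have "\<dots> = katugampola_integral q \<beta> c (h1 s) y - katugampola_integral q \<beta> c (h2 s) y"
      using that assms by (intro katugampola_integral_diff mono2_on_imp_mono_on_snd[OF h1]
          mono2_on_imp_mono_on_snd[OF h2]) auto
    finally show ?thesis .
  qed
  then have "katugampola_integral p \<alpha> a (\<lambda>s. katugampola_integral q \<beta> c (h s) y) x
      = katugampola_integral p \<alpha> a (\<lambda>s. katugampola_integral q \<beta> c (h1 s) y
          - katugampola_integral q \<beta> c (h2 s) y) x"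
    by (rule katugampola_integral_cong)
  also have "\<dots> = katugampola_integral p \<alpha> a (\<lambda>s. katugampola_integral q \<beta> c (h1 s) y) x
      - katugampola_integral p \<alpha> a (\<lambda>s. katugampola_integral q \<beta> c (h2 s) y) x"
    using assms by (intro katugampola_integral_diff inner_mono h1 h2) auto
  finally show ?thesis .
qed

theorem mainTheorem3:
  fixes a b c d p q \<alpha> \<beta> :: real and f :: "real \<Rightarrow> real \<Rightarrow> real"
  assumes "0 < a" "a < b" "0 < c" "c < d"
    and "p > -1" "q > -1" "\<alpha> > 0" "\<beta> > 0"
    and "arzela_bv a b c d f"
  shows "arzela_bv a b c d (katugampola_mixed p q a c \<alpha> \<beta> f)"
proof -
  obtain f1 f2 where mono: "mono2_on {a..b} {c..d} f1" "mono2_on {a..b} {c..d} f2"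
    and f: "\<And>x y. x \<in> {a..b} \<Longrightarrow> y \<in> {c..d} \<Longrightarrow> f x y = f1 x y - f2 x y \<and> 0 \<le> f1 x y \<and> 0 \<le> f2 x y"
    using arzela_bv_imp_mono2_diff[OF assms(9)] assms(2,4) by auto
  define C where "C = (p + 1) powr (1 - \<alpha>) * (q + 1) powr (1 - \<beta>) / (Gamma \<alpha> * Gamma \<beta>)"
  define I where "I g x y = katugampola_integral p \<alpha> a (\<lambda>s. katugampola_integral q \<beta> c (g s) y) x" for g x y
  have "C \<ge> 0"
    unfolding C_def using assms(7,8) by (auto intro!: divide_nonneg_pos mult_pos_pos Gamma_real_pos)
  then have "mono2_on {a..b} {c..d} (\<lambda>x y. C * I g x y)"
    if "mono2_on {a..b} {c..d} g" "\<And>s t. s \<in> {a..b} \<Longrightarrow> t \<in> {c..d} \<Longrightarrow> 0 \<le> g s t" for g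
    using mono2_on_katugampola_iterated[OF assms(1,3,5-8) that] unfolding I_def mono2_on_def
    by (auto intro: mult_left_mono)
  moreover have "katugampola_mixed p q a c \<alpha> \<beta> f x y = C * I f1 x y - C * I f2 x y"
    if "x \<in> {a..b}" "y \<in> {c..d}" for x y
    using katugampola_iterated_diff[OF assms(1,3,5-8) mono, of f x y] f that
    by (simp add: katugampola_mixed_eq_integral C_def I_def right_diff_distrib)
  ultimately show ?thesis
    using mono f by (intro mono2_diff_imp_arzela_bv) auto
qed

end
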